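(* Let $\mathcal{A}\subseteq M_n(\mathbb{C})$ be logmodular. Then there are complex numbers $\alpha_{ij},\beta_{ij}$, $i,j\in\{1,\dots,n\}$, such that every row of the matrix $[\alpha_{ij}]$ is non-zero, every column of the matrix $[\beta_{ij}]$ is non-zero, and for every $i,j\in\{1,\dots,n\}$ $$\sum_{k=1}^n \alpha_{ik}E_{i,k}\in\mathcal{A},\qquad \sum_{k=1}^n \beta_{kj}E_{k,j}\in\mathcal{A}.$$
   Context: $E_{i,j}$ denote the matrix units of $M_n(\mathbb{C})$. A unital subalgebra $\mathcal{A}\subseteq M_n(\mathbb{C})$ (containing the identity $1_n$) is called logmodular (in $M_n(\mathbb{C})$) if the set $\{a^*a : a\in\mathcal{A}^{-1}\}$ is dense in the set of positive invertible matrices in $M_n(\mathbb{C})$, where $\mathcal{A}^{-1}$ denotes the set of elements of $\mathcal{A}$ invertible in $\mathcal{A}$. *)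

theory Defs
  imports "HOL-Analysis.Analysis"
begin

text \<open>Matrices in M_n(C) are rendered as complex^'n^'n, with n = CARD('n).\<close>

definition cscale :: "complex \<Rightarrow> complex^'n^'n \<Rightarrow> complex^'n^'n" where
  "cscale c M = (\<chi> a b. c * M $ a $ b)"

definition matrix_unit :: "'n::finite \<Rightarrow> 'n \<Rightarrow> complex^'n^'n" where
  "matrix_unit i j = (\<chi> a b. if a = i \<and> b = j then 1 else 0)"

definition cadj :: "complex^'n^'n \<Rightarrow> complex^'n^'n" where
  "cadj M = (\<chi> a b. cnj (M $ b $ a))"

definition unital_subalgebra :: "(complex^'n::finite^'n) set \<Rightarrow> bool" where
  "unital_subalgebra A \<longleftrightarrow>
     mat 1 \<in> A \<and> 0 \<in> A \<and>
     (\<forall>a\<in>A. \<forall>b\<in>A. a + b \<in> A) \<and>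
     (\<forall>c. \<forall>a\<in>A. cscale c a \<in> A) \<and>
     (\<forall>a\<in>A. \<forall>b\<in>A. a ** b \<in> A)"

definition inv_in :: "(complex^'n::finite^'n) set \<Rightarrow> (complex^'n^'n) set" where
  "inv_in A = {a \<in> A. \<exists>b\<in>A. a ** b = mat 1 \<and> b ** a = mat 1}"

definition positive_mat :: "complex^'n::finite^'n \<Rightarrow> bool" where
  "positive_mat M \<longleftrightarrow> cadj M = M \<and>
     (\<forall>x :: complex^'n. let q = (\<Sum>i\<in>UNIV. cnj (x $ i) * (M *v x) $ i)
                          in Im q = 0 \<and> Re q \<ge> 0)"

definition pos_invertible :: "(complex^'n::finite^'n) set" where
  "pos_invertible = {M. positive_mat M \<and> invertible M}"

definition logmodular :: "(complex^'n::finite^'n) set \<Rightarrow> bool" where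
  "logmodular A \<longleftrightarrow> unital_subalgebra A \<and>
     pos_invertible \<subseteq> closure {cadj a ** a | a. a \<in> inv_in A}"

end

theory Submission
  imports Defs
begin

(* By density, for every positive weight p there is an a invertible in A with a^* a close to
   diag p.  The diagonal entries of a^* a are the squared column norms of a, so weights concentrated
   at j give elements of A whose columns other than j are small while column j is not.  Dually,
   a^{-1} lies in A and a^{-1} (a^{-1})^* = (a^* a)^{-1} is close to diag (1/p), so large weights off i
   make all rows of a^{-1} except row i small.  As A is a closed subspace, compactness turns these
   approximate witnesses into exact ones. *)

definition cinner :: "complex^'n::finite \<Rightarrow> complex^'n \<Rightarrow> complex" where
  "cinner x y = (\<Sum>i\<in>UNIV. cnj (x$i) * y$i)"

definition diag_mat :: "('n::finite \<Rightarrow> real) \<Rightarrow> complex^'n^'n" where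
  "diag_mat p = (\<chi> k l. if k = l then complex_of_real (p k) else 0)"

lemma power2_norm_vec: "(norm x)\<^sup>2 = (\<Sum>i\<in>UNIV. (norm (x$i))\<^sup>2)"
  for x :: "'a::real_normed_vector^'n::finite"
  by (simp add: norm_vec_def L2_set_def sum_nonneg)

lemma cnj_mult_self: "cnj z * z = complex_of_real ((cmod z)\<^sup>2)"
  using complex_norm_square[of z] by (simp add: mult.commute)

lemma cinner_self: "cinner x x = complex_of_real ((norm x)\<^sup>2)"
  by (simp add: cinner_def power2_norm_vec cnj_mult_self del: of_real_power)

lemma cinner_diff_right: "cinner x (y - z) = cinner x y - cinner x z"
  by (simp add: cinner_def algebra_simps sum_subtractf)

lemma cinner_adjoint: "cinner x (cadj M *v y) = cinner (M *v x) y"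
proof -
  have "cinner x (cadj M *v y) = (\<Sum>i\<in>UNIV. \<Sum>j\<in>UNIV. cnj (x$i) * cnj (M$j$i) * y$j)"
    by (simp add: cinner_def cadj_def matrix_vector_mult_def sum_distrib_left mult.assoc)
  also have "\<dots> = (\<Sum>j\<in>UNIV. \<Sum>i\<in>UNIV. cnj (x$i) * cnj (M$j$i) * y$j)"
    by (rule sum.swap)
  also have "\<dots> = cinner (M *v x) y"
    by (simp add: cinner_def matrix_vector_mult_def sum_distrib_left sum_distrib_right mult_ac)
  finally show ?thesis .
qed

lemma cinner_gram: "cinner y ((cadj a ** a) *v y) = complex_of_real ((norm (a *v y))\<^sup>2)"
  by (simp add: matrix_vector_mul_assoc[symmetric] cinner_adjoint cinner_self del: of_real_power)

lemma gram_diag_entry: "(cadj a ** a)$k$k = complex_of_real ((norm (column k a))\<^sup>2)"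
  by (simp add: matrix_matrix_mult_def cadj_def column_def power2_norm_vec cnj_mult_self
      del: of_real_power)

lemma diag_mat_mult_vec: "(diag_mat p *v y)$m = complex_of_real (p m) * y$m"
  by (simp add: diag_mat_def matrix_vector_mult_def if_distrib[of "\<lambda>c. c * _"] cong: if_cong)

lemma cinner_diag_mat: "cinner y (diag_mat p *v y) = complex_of_real (\<Sum>m\<in>UNIV. p m * (norm (y$m))\<^sup>2)"
  unfolding cinner_def of_real_sum
  by (rule sum.cong) (auto simp: diag_mat_mult_vec mult.left_commute cnj_mult_self simp del: of_real_power)

lemma norm_cinner_matrix_le:
  fixes y :: "complex^'n::finite"
  assumes "\<And>k l. cmod (E$k$l) \<le> \<delta>"
  shows "cmod (cinner y (E *v y)) \<le> \<delta> * CARD('n) * (norm y)\<^sup>2"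
proof -
  have "0 \<le> \<delta>" using assms norm_ge_zero order_trans by blast
  have "cmod (cinner y (E *v y)) \<le> (\<Sum>k\<in>UNIV. \<Sum>l\<in>UNIV. cmod (cnj (y$k) * E$k$l * y$l))"
    unfolding cinner_def matrix_vector_mult_def
    by (simp add: sum_distrib_left mult.assoc) (rule order_trans[OF norm_sum sum_mono[OF norm_sum]])
  also have "\<dots> \<le> (\<Sum>k\<in>UNIV. \<Sum>l\<in>UNIV. \<delta> * ((cmod (y$k))\<^sup>2 + (cmod (y$l))\<^sup>2) / 2)"
  proof (intro sum_mono)
    fix k l
    have amgm: "cmod (y$k) * cmod (y$l) \<le> ((cmod (y$k))\<^sup>2 + (cmod (y$l))\<^sup>2) / 2"
      using sum_squares_bound[of "cmod (y$k)" "cmod (y$l)"] by (simp add: power2_eq_square)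
    show "cmod (cnj (y$k) * E$k$l * y$l) \<le> \<delta> * ((cmod (y$k))\<^sup>2 + (cmod (y$l))\<^sup>2) / 2"
      using mult_mono[OF assms[of k l] amgm \<open>0 \<le> \<delta>\<close>]
      by (simp add: norm_mult mult_ac)
  qed
  also have "\<dots> = \<delta> * CARD('n) * (norm y)\<^sup>2"
    by (simp add: power2_norm_vec sum.distrib add_divide_distrib sum_divide_distrib[symmetric]
        sum_distrib_left[symmetric] algebra_simps)
  finally show ?thesis .
qed

lemma Re_cinner_ge_diag:
  fixes y :: "complex^'n::finite"
  assumes "\<And>k l. cmod ((G - diag_mat p)$k$l) \<le> \<delta>"
  shows "(\<Sum>m\<in>UNIV. p m * (norm (y$m))\<^sup>2) - \<delta> * CARD('n) * (norm y)\<^sup>2 \<le> Re (cinner y (G *v y))"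
proof -
  have "cinner y (G *v y) = cinner y (diag_mat p *v y) + cinner y ((G - diag_mat p) *v y)"
    by (simp add: matrix_vector_mult_diff_rdistrib cinner_diff_right)
  moreover have "- Re (cinner y ((G - diag_mat p) *v y)) \<le> \<delta> * CARD('n) * (norm y)\<^sup>2"
    using abs_Re_le_cmod[of "cinner y ((G - diag_mat p) *v y)"] norm_cinner_matrix_le[OF assms]
    by (meson abs_le_D2 order_trans)
  ultimately show ?thesis by (simp add: cinner_diag_mat)
qed

lemma inverse_row_norm_le:
  fixes a b :: "complex^'n::finite^'n"
  assumes ab: "a ** b = mat 1"
    and close: "\<And>k l. cmod ((cadj a ** a - diag_mat p)$k$l) \<le> \<delta>"
    and p_ge_1: "\<And>m. 1 \<le> p m" and small: "\<delta> * CARD('n) \<le> 1/2"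
  shows "p k * (norm (b$k))\<^sup>2 \<le> 2"
proof -
  \<comment> \<open>y = b b^* e_k: then y_k is the squared norm of row k of b, and it equals |a y|^2 = y^* (a^* a) y.\<close>
  define x where "x = (\<chi> l. cnj (b$k$l))"
  define y where "y = b *v x"
  define r where "r = (norm (b$k))\<^sup>2"
  define S where "S = (\<Sum>m\<in>UNIV. p m * (norm (y$m))\<^sup>2)"
  have p_nonneg: "0 \<le> p m" for m using p_ge_1[of m] by linarith
  have "a *v y = x" by (simp add: y_def matrix_vector_mul_assoc ab)
  moreover have "norm x = norm (b$k)" by (simp add: x_def norm_vec_def)
  ultimately have r_eq: "r = Re (cinner y ((cadj a ** a) *v y))" by (simp add: cinner_gram r_def)
  have "y$k = complex_of_real r"
    by (simp add: y_def x_def r_def matrix_vector_mult_def power2_norm_vec complex_norm_square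
        del: of_real_power)
  moreover have "p k * (norm (y$k))\<^sup>2 \<le> S"
    unfolding S_def by (intro member_le_sum) (simp_all add: p_nonneg)
  moreover have "norm (complex_of_real r) = r" by (simp add: r_def del: of_real_power)
  ultimately have "p k * r\<^sup>2 \<le> S" by simp
  moreover have "(norm y)\<^sup>2 \<le> S"
    unfolding S_def power2_norm_vec using p_ge_1 by (intro sum_mono) (simp add: mult_le_cancel_right1)
  moreover have "\<delta> * CARD('n) * (norm y)\<^sup>2 \<le> (norm y)\<^sup>2 / 2"
    using mult_right_mono[OF small, of "(norm y)\<^sup>2"] by simp
  moreover have "S - \<delta> * CARD('n) * (norm y)\<^sup>2 \<le> r"
    unfolding S_def r_eq by (rule Re_cinner_ge_diag[OF close])
  ultimately have "p k * r * r \<le> 2 * r" by (simp add: power2_eq_square)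
  moreover have "0 \<le> r" by (simp add: r_def)
  ultimately show ?thesis
    unfolding r_def[symmetric] by (cases "r = 0") (simp_all add: mult_le_cancel_right)
qed

lemma inverse_row_norm_ge:
  fixes a b :: "complex^'n::finite^'n"
  assumes ba: "b ** a = mat 1" and close: "cmod ((cadj a ** a)$k$k - 1) \<le> 1/2"
  shows "1/2 \<le> (norm (b$k))\<^sup>2"
proof -
  have "(norm (column k a))\<^sup>2 - 1 \<le> 1/2"
    using close abs_Re_le_cmod[of "(cadj a ** a)$k$k - 1"] by (simp add: gram_diag_entry)
  have "1 = cmod (\<Sum>l\<in>UNIV. b$k$l * a$l$k)"
    using arg_cong[OF ba, of "\<lambda>M. M$k$k"] by (simp add: matrix_matrix_mult_def mat_def)
  also have "\<dots> \<le> (\<Sum>l\<in>UNIV. cmod (b$k$l) * cmod (a$l$k))"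
    by (rule order_trans[OF norm_sum]) (simp add: norm_mult)
  also have "\<dots> \<le> (\<Sum>l\<in>UNIV. (cmod (b$k$l))\<^sup>2 + (cmod (a$l$k))\<^sup>2 / 4)"
  proof (rule sum_mono)
    fix l
    have "0 \<le> (cmod (a$l$k) / 2 - cmod (b$k$l))\<^sup>2" by simp
    then show "cmod (b$k$l) * cmod (a$l$k) \<le> (cmod (b$k$l))\<^sup>2 + (cmod (a$l$k))\<^sup>2 / 4"
      by (simp add: power2_eq_square field_simps)
  qed
  also have "\<dots> = (norm (b$k))\<^sup>2 + (norm (column k a))\<^sup>2 / 4"
    by (simp add: power2_norm_vec column_def sum.distrib sum_divide_distrib)
  finally show ?thesis using \<open>(norm (column k a))\<^sup>2 - 1 \<le> 1/2\<close> by linarith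
qed

lemma diag_mat_mult: "diag_mat p ** diag_mat q = diag_mat (\<lambda>m. p m * q m)"
  by (simp add: diag_mat_def matrix_matrix_mult_def vec_eq_iff if_distrib[of "\<lambda>c. c * _"]
      cong: if_cong)

lemma diag_mat_pos_invertible:
  fixes p :: "'n::finite \<Rightarrow> real"
  assumes "\<And>m. 0 < p m"
  shows "diag_mat p \<in> pos_invertible"
proof -
  have "cadj (diag_mat p) = diag_mat p" by (simp add: cadj_def diag_mat_def vec_eq_iff)
  moreover have "0 \<le> (\<Sum>m\<in>UNIV. p m * (norm (x$m))\<^sup>2)" for x :: "complex^'n"
    using assms by (intro sum_nonneg) (simp add: less_imp_le)
  ultimately have "positive_mat (diag_mat p)"
    unfolding positive_mat_def Let_def cinner_def[symmetric] by (simp add: cinner_diag_mat)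
  moreover have "diag_mat p ** diag_mat (\<lambda>m. 1 / p m) = mat 1"
    and "diag_mat (\<lambda>m. 1 / p m) ** diag_mat p = mat 1"
    using assms by (simp_all add: diag_mat_mult less_imp_neq[symmetric])
      (simp_all add: diag_mat_def mat_def vec_eq_iff)
  ultimately show ?thesis unfolding pos_invertible_def invertible_def by blast
qed

lemma logmodular_gram_approx:
  assumes "logmodular A" "\<And>m. 0 < p m" "0 < \<delta>"
  obtains a b where "a \<in> A" "b \<in> A" "a ** b = mat 1" "b ** a = mat 1"
    "\<And>k l. cmod ((cadj a ** a - diag_mat p)$k$l) \<le> \<delta>"
proof -
  have "pos_invertible \<subseteq> closure {cadj a ** a | a. a \<in> inv_in A}"
    using assms(1) unfolding logmodular_def by (rule conjunct2)
  then have "diag_mat p \<in> closure {cadj a ** a | a. a \<in> inv_in A}"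
    using diag_mat_pos_invertible[OF assms(2)] by (rule subsetD)
  then obtain a where a: "a \<in> inv_in A" and "norm (cadj a ** a - diag_mat p) < \<delta>"
    using assms(3) unfolding closure_approachable dist_norm by blast
  moreover have "cmod (M$k$l) \<le> norm M" for M :: "complex^'n^'n" and k l
  proof -
    have "cmod (M$k$l) \<le> norm (M$k)" by (rule Finite_Cartesian_Product.norm_nth_le)
    also have "\<dots> \<le> norm M" by (rule Finite_Cartesian_Product.norm_nth_le)
    finally show ?thesis .
  qed
  ultimately have "cmod ((cadj a ** a - diag_mat p)$k$l) \<le> \<delta>" for k l
    by (meson less_imp_le order_trans)
  with a that show ?thesis unfolding inv_in_def by blast
qed

lemma subspace_unital_subalgebra:
  fixes A :: "(complex^'n::finite^'n) set"
  assumes "unital_subalgebra A"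
  shows "subspace A"
proof -
  have "c *\<^sub>R x = cscale (complex_of_real c) x" for c and x :: "complex^'n^'n"
    by (simp add: cscale_def vec_eq_iff) (simp add: scaleR_conv_of_real)
  with assms show ?thesis unfolding unital_subalgebra_def subspace_def by simp
qed

lemma closed_approximate_witness:
  fixes S :: "'a::{heine_borel,real_normed_vector} set" and g h :: "'a \<Rightarrow> real"
  assumes "closed S" "continuous_on UNIV g" "continuous_on UNIV h"
    and approx: "\<And>e. 0 < e \<Longrightarrow> \<exists>x\<in>S. norm x \<le> R \<and> g x \<le> e \<and> \<eta> \<le> h x"
  shows "\<exists>x\<in>S. g x \<le> 0 \<and> \<eta> \<le> h x"
proof -
  define K where "K = cball 0 R \<inter> S \<inter> {x. \<eta> \<le> h x}"
  have "closed {x. \<eta> \<le> h x}" by (rule closed_Collect_le[OF continuous_on_const assms(3)])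
  then have "compact K" unfolding K_def
    by (intro compact_Int_closed compact_cball assms(1))
  moreover have "K \<noteq> {}" using approx[of 1] unfolding K_def by auto
  moreover have "continuous_on K g" using continuous_on_subset[OF assms(2) subset_UNIV] .
  ultimately obtain x where "x \<in> K" and x_min: "\<forall>y\<in>K. g x \<le> g y"
    using continuous_attains_inf by blast
  have "g x \<le> 0 + e" if e_pos: "0 < e" for e
  proof -
    obtain y where "y \<in> S" "norm y \<le> R" "g y \<le> e" "\<eta> \<le> h y" using approx[OF e_pos] by blast
    then have "y \<in> K" unfolding K_def by simp
    with x_min \<open>g y \<le> e\<close> show ?thesis by fastforce
  qed
  then have "g x \<le> 0" by (rule field_le_epsilon)
  with \<open>x \<in> K\<close> show ?thesis unfolding K_def by blast
qed

lemma closed_row_supported_witness: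
  fixes S :: "(complex^'n::finite^'n) set"
  assumes "closed S"
    and approx: "\<And>e. 0 < e \<Longrightarrow> \<exists>c\<in>S. (\<forall>k. (norm (c$k))\<^sup>2 \<le> 2) \<and>
           (\<forall>k. k \<noteq> i \<longrightarrow> (norm (c$k))\<^sup>2 \<le> e) \<and> 1/2 \<le> (norm (c$i))\<^sup>2"
  shows "\<exists>c\<in>S. (\<forall>k. k \<noteq> i \<longrightarrow> c$k = 0) \<and> c$i \<noteq> 0"
proof -
  define n where "n = real CARD('n)"
  define off_row where "off_row c = (\<Sum>k\<in>UNIV - {i}. (norm (c$k))\<^sup>2)" for c :: "complex^'n^'n"
  have "\<exists>c\<in>S. norm c \<le> sqrt (2 * n) \<and> off_row c \<le> e \<and> 1/2 \<le> (norm (c$i))\<^sup>2" if "0 < e" for e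
  proof -
    have "0 < e / n" using \<open>0 < e\<close> by (simp add: n_def)
    then obtain c where c: "c \<in> S" "\<forall>k. (norm (c$k))\<^sup>2 \<le> 2"
      "\<forall>k. k \<noteq> i \<longrightarrow> (norm (c$k))\<^sup>2 \<le> e / n" "1/2 \<le> (norm (c$i))\<^sup>2"
      using approx by blast
    have "(norm c)\<^sup>2 \<le> (\<Sum>k\<in>(UNIV :: 'n set). 2)"
      unfolding power2_norm_vec[of c] using c(2) by (intro sum_mono) simp
    then have "norm c \<le> sqrt (2 * n)" by (intro real_le_rsqrt) (simp add: n_def)
    moreover have "off_row c \<le> card (UNIV - {i}) * (e / n)"
      unfolding off_row_def using c(3) by (intro sum_bounded_above) simp
    moreover have "card (UNIV - {i}) * (e / n) \<le> n * (e / n)"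
      using \<open>0 < e / n\<close> by (intro mult_right_mono) (simp_all add: n_def card_mono)
    ultimately show ?thesis using c(1,4) \<open>0 < e\<close> by (auto simp: n_def)
  qed
  moreover have "continuous_on UNIV off_row" unfolding off_row_def by (intro continuous_intros)
  moreover have "continuous_on UNIV (\<lambda>c. (norm (c$i))\<^sup>2)" by (intro continuous_intros)
  ultimately obtain c where c: "c \<in> S" "off_row c \<le> 0" "1/2 \<le> (norm (c$i))\<^sup>2"
    using closed_approximate_witness[OF assms(1)] by blast
  then have "off_row c = 0" unfolding off_row_def by (intro antisym sum_nonneg) simp_all
  then have "\<forall>k\<in>UNIV - {i}. (norm (c$k))\<^sup>2 = 0" by (simp add: off_row_def sum_nonneg_eq_0_iff)
  moreover have "c$i \<noteq> 0" using c(3) by auto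
  ultimately show ?thesis using c(1) by auto
qed

lemma closed_logmodular: "logmodular A \<Longrightarrow> closed A"
  unfolding logmodular_def using closed_subspace subspace_unital_subalgebra by blast

lemma logmodular_row_witness:
  fixes A :: "(complex^'n::finite^'n) set"
  assumes "logmodular A"
  shows "\<exists>c\<in>A. (\<forall>k. k \<noteq> i \<longrightarrow> c$k = 0) \<and> c$i \<noteq> 0"
proof (rule closed_row_supported_witness[OF closed_logmodular[OF assms]])
  fix e :: real assume "0 < e"
  define \<delta> where "\<delta> = 1 / (2 * real CARD('n))"
  define N where "N = max 1 (2 / e)"
  define p where "p m = (if m = i then 1 else N)" for m
  have p_ge_1: "1 \<le> p m" for m by (simp add: p_def N_def)
  then have "0 < p m" for m using less_le_trans zero_less_one by blast
  moreover have "0 < \<delta>" by (simp add: \<delta>_def)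
  ultimately obtain a b where "b \<in> A" "a ** b = mat 1" "b ** a = mat 1"
    and close: "\<And>k l. cmod ((cadj a ** a - diag_mat p)$k$l) \<le> \<delta>"
    using logmodular_gram_approx[OF assms] by metis
  have row_le: "p k * (norm (b$k))\<^sup>2 \<le> 2" for k
    by (rule inverse_row_norm_le[OF \<open>a ** b = mat 1\<close> close p_ge_1]) (simp add: \<delta>_def)
  have "(norm (b$k))\<^sup>2 \<le> 2" for k
    using row_le[of k] mult_right_mono[OF p_ge_1[of k], of "(norm (b$k))\<^sup>2"] by simp
  moreover have "(norm (b$k))\<^sup>2 \<le> e" if "k \<noteq> i" for k
  proof -
    have "2 / e * (norm (b$k))\<^sup>2 \<le> 2"
      using row_le[of k] mult_right_mono[OF max.cobounded2[of "2 / e" 1], of "(norm (b$k))\<^sup>2"] that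
      by (simp add: p_def N_def)
    then show ?thesis using \<open>0 < e\<close> by (simp add: field_simps)
  qed
  moreover have "1/2 \<le> (norm (b$i))\<^sup>2"
  proof (rule inverse_row_norm_ge[OF \<open>b ** a = mat 1\<close>])
    have "\<delta> \<le> 1/2" by (simp add: \<delta>_def)
    then show "cmod ((cadj a ** a)$i$i - 1) \<le> 1/2"
      using close[of i i] by (simp add: diag_mat_def p_def)
  qed
  ultimately show "\<exists>c\<in>A. (\<forall>k. (norm (c$k))\<^sup>2 \<le> 2) \<and> (\<forall>k. k \<noteq> i \<longrightarrow> (norm (c$k))\<^sup>2 \<le> e) \<and>
      1/2 \<le> (norm (c$i))\<^sup>2"
    using \<open>b \<in> A\<close> by blast
qed

lemma transpose_nth: "transpose M $ k = column k M"
  by (simp add: transpose_def column_def)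

lemma linear_transpose: "linear transpose"
  by (rule linearI) (simp_all add: transpose_def vec_eq_iff)

lemma logmodular_column_witness:
  fixes A :: "(complex^'n::finite^'n) set"
  assumes "logmodular A"
  shows "\<exists>c\<in>A. (\<forall>k. k \<noteq> j \<longrightarrow> column k c = 0) \<and> column j c \<noteq> 0"
proof -
  have "unital_subalgebra A" using assms unfolding logmodular_def by (rule conjunct1)
  then have closed_T: "closed (transpose ` A)"
    by (intro closed_subspace linear_subspace_image[OF linear_transpose] subspace_unital_subalgebra)
  have approx_T: "\<exists>c\<in>transpose ` A. (\<forall>k. (norm (c$k))\<^sup>2 \<le> 2) \<and>
      (\<forall>k. k \<noteq> j \<longrightarrow> (norm (c$k))\<^sup>2 \<le> e) \<and> 1/2 \<le> (norm (c$j))\<^sup>2" if "0 < e" for e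
  proof -
    define \<delta> where "\<delta> = min (e / 2) (1/4)"
    define p where "p m = (if m = j then 1 else \<delta>)" for m
    have "0 < \<delta>" "\<delta> \<le> 1/4" "\<delta> \<le> e / 2" using that by (simp_all add: \<delta>_def)
    moreover have "0 < p m" for m using \<open>0 < \<delta>\<close> by (simp add: p_def)
    ultimately obtain a where "a \<in> A" and close: "\<And>k l. cmod ((cadj a ** a - diag_mat p)$k$l) \<le> \<delta>"
      using logmodular_gram_approx[OF assms] by metis
    have col: "\<bar>(norm (column k a))\<^sup>2 - p k\<bar> \<le> \<delta>" for k
    proof -
      have "(cadj a ** a - diag_mat p)$k$k = complex_of_real ((norm (column k a))\<^sup>2 - p k)"
        by (simp add: gram_diag_entry diag_mat_def del: of_real_power)
      then show ?thesis using close[of k k] by (simp only: norm_of_real)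
    qed
    show ?thesis
    proof (rule bexI[of _ "transpose a"])
      show "transpose a \<in> transpose ` A" using \<open>a \<in> A\<close> by (rule imageI)
      have "(norm (column k a))\<^sup>2 \<le> 2" for k
        using col[of k] \<open>\<delta> \<le> 1/4\<close> by (cases "k = j") (simp_all add: p_def abs_le_iff)
      moreover have "(norm (column k a))\<^sup>2 \<le> e" if "k \<noteq> j" for k
        using col[of k] that \<open>\<delta> \<le> e / 2\<close> by (simp add: p_def abs_le_iff)
      moreover have "1/2 \<le> (norm (column j a))\<^sup>2"
        using col[of j] \<open>\<delta> \<le> 1/4\<close> by (simp add: p_def abs_le_iff)
      ultimately show "(\<forall>k. (norm (transpose a $ k))\<^sup>2 \<le> 2) \<and>
          (\<forall>k. k \<noteq> j \<longrightarrow> (norm (transpose a $ k))\<^sup>2 \<le> e) \<and> 1/2 \<le> (norm (transpose a $ j))\<^sup>2"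
        by (simp add: transpose_nth)
    qed
  qed
  obtain c where "c \<in> transpose ` A" "\<forall>k. k \<noteq> j \<longrightarrow> c$k = 0" "c$j \<noteq> 0"
    using closed_row_supported_witness[OF closed_T approx_T] by blast
  then obtain a where "a \<in> A" "\<forall>k. k \<noteq> j \<longrightarrow> column k a = 0" "column j a \<noteq> 0"
    by (auto simp: transpose_nth)
  then show ?thesis by blast
qed

lemma sum_matrix_unit_row:
  assumes "\<And>k. k \<noteq> i \<Longrightarrow> c$k = 0"
  shows "(\<Sum>k\<in>UNIV. cscale (c$i$k) (matrix_unit i k)) = c"
proof (rule vec_eq_iff[THEN iffD2], intro allI vec_eq_iff[THEN iffD2])
  fix r s
  show "(\<Sum>k\<in>UNIV. cscale (c$i$k) (matrix_unit i k))$r$s = c$r$s"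
    using assms[of r] by (cases "r = i") (simp_all add: sum_component cscale_def matrix_unit_def
        if_distrib[of "(*) _"] cong: if_cong)
qed

lemma sum_matrix_unit_column:
  assumes "\<And>k. k \<noteq> j \<Longrightarrow> column k c = 0"
  shows "(\<Sum>k\<in>UNIV. cscale (c$k$j) (matrix_unit k j)) = c"
proof (rule vec_eq_iff[THEN iffD2], intro allI vec_eq_iff[THEN iffD2])
  fix r s
  show "(\<Sum>k\<in>UNIV. cscale (c$k$j) (matrix_unit k j))$r$s = c$r$s"
    using assms[of s] by (cases "s = j") (simp_all add: sum_component cscale_def matrix_unit_def
        column_def vec_eq_iff if_distrib[of "(*) _"] cong: if_cong)
qed

theorem lemma1:
  fixes A :: "(complex^'n::finite^'n) set"
  assumes "logmodular A"
  shows "\<exists>\<alpha> \<beta> :: 'n \<Rightarrow> 'n \<Rightarrow> complex.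
           (\<forall>i. \<exists>k. \<alpha> i k \<noteq> 0) \<and> (\<forall>j. \<exists>k. \<beta> k j \<noteq> 0) \<and>
           (\<forall>i j. (\<Sum>k\<in>UNIV. cscale (\<alpha> i k) (matrix_unit i k)) \<in> A \<and>
                  (\<Sum>k\<in>UNIV. cscale (\<beta> k j) (matrix_unit k j)) \<in> A)"
proof -
  obtain R where R: "\<And>i. R i \<in> A" "\<And>i k. k \<noteq> i \<Longrightarrow> R i $ k = 0" "\<And>i. R i $ i \<noteq> 0"
    using logmodular_row_witness[OF assms] by metis
  obtain C where C: "\<And>j. C j \<in> A" "\<And>j k. k \<noteq> j \<Longrightarrow> column k (C j) = 0" "\<And>j. column j (C j) \<noteq> 0"
    using logmodular_column_witness[OF assms] by metis
  have "(\<Sum>k\<in>UNIV. cscale (R i $ i $ k) (matrix_unit i k)) \<in> A" for i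
    using sum_matrix_unit_row[of i "R i"] R by simp
  moreover have "(\<Sum>k\<in>UNIV. cscale (C j $ k $ j) (matrix_unit k j)) \<in> A" for j
    using sum_matrix_unit_column[of j "C j"] C by simp
  moreover have "\<exists>k. R i $ i $ k \<noteq> 0" for i using R(3)[of i] by (auto simp: vec_eq_iff)
  moreover have "\<exists>k. C j $ k $ j \<noteq> 0" for j using C(3)[of j] by (auto simp: vec_eq_iff column_def)
  ultimately show ?thesis
    by (intro exI[where x = "\<lambda>i k. R i $ i $ k"] exI[where x = "\<lambda>k j. C j $ k $ j"]) simp
qed

end
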